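(* For every integer $N>1$ there exists a non-disjoint $(2^N,N,2^{N-1},(N-1)2^{N-2})$-SEDF (in $\mathbb{Z}_{2^N}$); in particular, non-disjoint SEDFs exist with any number $N\ge 2$ of sets.
   Context: Groups are written additively. For subsets $A,B$ of a group $G$, $\Delta(A,B)$ denotes the multiset $\{a-b: a\in A, b\in B\}$, and $\lambda G$ denotes the multiset containing each element of $G$ exactly $\lambda$ times. For a group $G$ of order $v$ and $m>1$, a family of $k$-subsets $\{A_1,\dots,A_m\}$ of $G$ (not required to be disjoint) is a non-disjoint $(v,m,k,\lambda)$-SEDF if for each $1\le i\le m$ the multiset union $\bigcup_{j\neq i}\Delta(A_i,A_j)$ equals $\lambda G$. *)

theory Defs
  imports Main "HOL-Library.Multiset"
begin

text \<open>The cyclic group Z_n is modelled by the integers {0..<n} with addition mod n.\<close>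

definition zn :: "nat \<Rightarrow> int set" where
  "zn n = {0..<int n}"

definition diff_mset :: "nat \<Rightarrow> int set \<Rightarrow> int set \<Rightarrow> int multiset" where
  "diff_mset n A B = image_mset (\<lambda>(a, b). (a - b) mod int n) (mset_set (A \<times> B))"

definition lam_group :: "nat \<Rightarrow> nat \<Rightarrow> int multiset" where
  "lam_group n lam = repeat_mset lam (mset_set (zn n))"

definition nondisjoint_sedf ::
  "nat \<Rightarrow> nat \<Rightarrow> nat \<Rightarrow> nat \<Rightarrow> (nat \<Rightarrow> int set) \<Rightarrow> bool" where
  "nondisjoint_sedf v m k lam A \<longleftrightarrow>
     m > 1 \<and>
     (\<forall>i<m. A i \<subseteq> zn v \<and> card (A i) = k) \<and>
     (\<forall>i<m. (\<Sum>j\<in>{..<m} - {i}. diff_mset v (A i) (A j)) = lam_group v lam)"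

end

theory Submission
  imports Defs
begin

text \<open>Take for \<open>A\<^sub>k\<close> the residues mod \<open>2^N\<close> whose binary digit \<open>k\<close> is \<open>0\<close>. For \<open>i < j\<close>,
  the representations \<open>d = a - b\<close> with \<open>a \<in> A\<^sub>i\<close>, \<open>b \<in> A\<^sub>j\<close> correspond to the \<open>b\<close> whose
  digit \<open>j\<close> vanishes and for which digit \<open>i\<close> of \<open>b + d\<close> vanishes. Modulo \<open>2^(j+1)\<close>, the
  first condition cuts out the interval \<open>[0, 2^j)\<close>, a union of whole periods of the second
  condition, which depends only on \<open>b mod 2^(i+1)\<close> and holds for half of every such period.
  So every \<open>d\<close> has \<open>2^(N-2)\<close> representations; the case \<open>i > j\<close> is symmetric, and summing
  over the \<open>N - 1\<close> indices \<open>j \<noteq> i\<close> gives \<open>\<lambda> = (N - 1) 2^(N-2)\<close>.\<close>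

lemma card_periodic_shift:
  fixes M e :: int
  assumes "M > 0" and periodic: "\<And>x. P x = P (x mod M)"
  shows "card {b\<in>{0..<M}. P (b + e)} = card {b\<in>{0..<M}. P b}"
proof -
  let ?f = "\<lambda>b. (b + e) mod M"
  have inj: "inj_on ?f {b\<in>{0..<M}. P (b + e)}"
  proof (rule inj_onI)
    fix x y assume x: "x \<in> {b\<in>{0..<M}. P (b + e)}" and y: "y \<in> {b\<in>{0..<M}. P (b + e)}"
      and eq: "?f x = ?f y"
    have "x mod M = y mod M" using eq by (metis add_diff_cancel_right' mod_diff_cong)
    then show "x = y" using x y by simp
  qed
  have img: "?f ` {b\<in>{0..<M}. P (b + e)} = {b\<in>{0..<M}. P b}"
  proof
    show "?f ` {b\<in>{0..<M}. P (b + e)} \<subseteq> {b\<in>{0..<M}. P b}"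
      using \<open>M > 0\<close> periodic by auto
    show "{b\<in>{0..<M}. P b} \<subseteq> ?f ` {b\<in>{0..<M}. P (b + e)}"
    proof
      fix c assume c: "c \<in> {b\<in>{0..<M}. P b}"
      let ?b = "(c - e) mod M"
      have "?f ?b = c" using c by (simp add: mod_add_left_eq)
      moreover have "P (?b + e)" using c periodic[of "?b + e"] \<open>?f ?b = c\<close> by simp
      moreover have "?b \<in> {0..<M}" using \<open>M > 0\<close> by simp
      ultimately have "?b \<in> {b\<in>{0..<M}. P (b + e)} \<and> c = ?f ?b" by simp
      then show "c \<in> ?f ` {b\<in>{0..<M}. P (b + e)}" by blast
    qed
  qed
  show ?thesis using card_image[OF inj] img by simp
qed

lemma card_periodic_repeat:
  fixes M :: int
  assumes "M > 0" and periodic: "\<And>x. P x = P (x mod M)"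
  shows "card {b\<in>{0..<int k * M}. P b} = k * card {b\<in>{0..<M}. P b}"
proof (induction k)
  case 0
  then show ?case by simp
next
  case (Suc k)
  let ?shift = "\<lambda>b. b + int k * M"
  have shift_invariant: "P (?shift b) = P b" for b
    using periodic[of "?shift b"] periodic[of b] by simp
  have split: "{b\<in>{0..<int (Suc k) * M}. P b} = {b\<in>{0..<int k * M}. P b} \<union> ?shift ` {b\<in>{0..<M}. P b}"
  proof (intro equalityI subsetI)
    fix b assume b: "b \<in> {b\<in>{0..<int (Suc k) * M}. P b}"
    show "b \<in> {b\<in>{0..<int k * M}. P b} \<union> ?shift ` {b\<in>{0..<M}. P b}"
    proof (cases "b < int k * M")
      case True
      then show ?thesis using b by simp
    next
      case False
      then have "b - int k * M \<in> {b\<in>{0..<M}. P b}"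
        using b shift_invariant[of "b - int k * M"] by (simp add: algebra_simps)
      then have "b \<in> ?shift ` {b\<in>{0..<M}. P b}"
        by (rule rev_image_eqI) simp
      then show ?thesis ..
    qed
  qed (use \<open>M > 0\<close> shift_invariant in \<open>auto simp: algebra_simps\<close>)
  have finite_part: "finite {b\<in>{0..<X}. P b}" for X :: int
    by (rule finite_subset[of _ "{0..<X}"]) auto
  have "card {b\<in>{0..<int (Suc k) * M}. P b} = card {b\<in>{0..<int k * M}. P b} + card (?shift ` {b\<in>{0..<M}. P b})"
    unfolding split by (intro card_Un_disjoint finite_imageI finite_part) auto
  also have "card (?shift ` {b\<in>{0..<M}. P b}) = card {b\<in>{0..<M}. P b}"
    by (rule card_image) (auto simp: inj_on_def)
  finally show ?case
    using Suc by simp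
qed

lemma card_periodic_pow2:
  assumes "m \<le> N" and periodic: "\<And>x. P x = P (x mod 2 ^ m)"
  shows "card {b\<in>{0..<(2::int) ^ N}. P b} = 2 ^ (N - m) * card {b\<in>{0..<(2::int) ^ m}. P b}"
proof -
  have "(2::int) ^ N = int (2 ^ (N - m)) * 2 ^ m"
    using \<open>m \<le> N\<close> by (simp flip: power_add)
  then show ?thesis
    using card_periodic_repeat[of "2 ^ m" P "2 ^ (N - m)"] periodic by simp
qed

lemma card_zero_digit_translate:
  fixes e :: int
  shows "card {b\<in>{0..<(2::int) ^ (p + 1)}. (b + e) mod 2 ^ (p + 1) < 2 ^ p} = 2 ^ p"
proof -
  have "card {b\<in>{0..<(2::int) ^ (p + 1)}. (b + e) mod 2 ^ (p + 1) < 2 ^ p}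
      = card {b\<in>{0..<(2::int) ^ (p + 1)}. b mod 2 ^ (p + 1) < 2 ^ p}"
    by (rule card_periodic_shift) simp_all
  also have "{b\<in>{0..<(2::int) ^ (p + 1)}. b mod 2 ^ (p + 1) < 2 ^ p} = {0..<2 ^ p}"
    by auto
  finally show ?thesis by simp
qed

lemma card_two_zero_digits:
  fixes e :: int
  assumes "p < q" "q < N"
  shows "card {b\<in>{0..<(2::int) ^ N}. b mod 2 ^ (q + 1) < 2 ^ q \<and> (b + e) mod 2 ^ (p + 1) < 2 ^ p}
    = 2 ^ (N - 2)"
proof -
  have "(2::int) ^ (p + 1) dvd 2 ^ (q + 1)"
    using \<open>p < q\<close> by (simp add: le_imp_power_dvd)
  then have low_digit_periodic: "((x mod 2 ^ (q + 1)) + e) mod 2 ^ (p + 1) = (x + e) mod (2::int) ^ (p + 1)" for x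
    by (metis mod_add_left_eq mod_mod_cancel)
  have "card {b\<in>{0..<(2::int) ^ N}. b mod 2 ^ (q + 1) < 2 ^ q \<and> (b + e) mod 2 ^ (p + 1) < 2 ^ p}
      = 2 ^ (N - (q + 1)) * card {b\<in>{0..<(2::int) ^ (q + 1)}. b mod 2 ^ (q + 1) < 2 ^ q \<and> (b + e) mod 2 ^ (p + 1) < 2 ^ p}"
    by (intro card_periodic_pow2) (use \<open>q < N\<close> in simp, simp only: low_digit_periodic mod_mod_trivial)
  also have "{b\<in>{0..<(2::int) ^ (q + 1)}. b mod 2 ^ (q + 1) < 2 ^ q \<and> (b + e) mod 2 ^ (p + 1) < 2 ^ p}
      = {b\<in>{0..<(2::int) ^ q}. (b + e) mod 2 ^ (p + 1) < 2 ^ p}"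
    by auto
  also have "card \<dots> = 2 ^ (q - (p + 1)) * card {b\<in>{0..<(2::int) ^ (p + 1)}. (b + e) mod 2 ^ (p + 1) < 2 ^ p}"
    using \<open>p < q\<close> by (intro card_periodic_pow2) (simp_all add: mod_add_left_eq)
  also have "card {b\<in>{0..<(2::int) ^ (p + 1)}. (b + e) mod 2 ^ (p + 1) < 2 ^ p} = 2 ^ p"
    by (rule card_zero_digit_translate)
  also have "(2::nat) ^ (N - (q + 1)) * (2 ^ (q - (p + 1)) * 2 ^ p) = 2 ^ (N - 2)"
    using assms by (simp flip: power_add)
  finally show ?thesis .
qed

lemma set_diff_mset_subset_zn:
  assumes "v > 0"
  shows "set_mset (diff_mset v A B) \<subseteq> zn v"
  using assms by (auto simp: diff_mset_def zn_def)

lemma count_diff_mset: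
  assumes "A \<subseteq> zn v" "B \<subseteq> zn v"
  shows "count (diff_mset v A B) d = card {(a, b) \<in> A \<times> B. (a - b) mod int v = d}"
proof -
  have "finite (A \<times> B)"
    using assms by (auto simp: zn_def intro: finite_subset)
  then have "count (diff_mset v A B) d = card {x \<in> A \<times> B. (\<lambda>(a, b). (a - b) mod int v) x = d}"
    by (simp add: diff_mset_def count_image_mset Int_def conj_commute)
  also have "{x \<in> A \<times> B. (\<lambda>(a, b). (a - b) mod int v) x = d} = {(a, b) \<in> A \<times> B. (a - b) mod int v = d}"
    by auto
  finally show ?thesis .
qed

lemma count_diff_mset_by_subtrahend:
  assumes "A \<subseteq> zn v" "B \<subseteq> zn v" "d \<in> zn v"
  shows "count (diff_mset v A B) d = card {b \<in> B. (b + d) mod int v \<in> A}"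
proof -
  have "{(a, b) \<in> A \<times> B. (a - b) mod int v = d} = (\<lambda>b. ((b + d) mod int v, b)) ` {b \<in> B. (b + d) mod int v \<in> A}"
  proof (intro equalityI subsetI)
    fix x assume "x \<in> {(a, b) \<in> A \<times> B. (a - b) mod int v = d}"
    then obtain a b where "x = (a, b)" "a \<in> A" "b \<in> B" "(a - b) mod int v = d" by blast
    moreover from this have "(b + d) mod int v = a"
      using \<open>A \<subseteq> zn v\<close> by (auto simp: zn_def mod_add_right_eq)
    ultimately show "x \<in> (\<lambda>b. ((b + d) mod int v, b)) ` {b \<in> B. (b + d) mod int v \<in> A}"
      by (intro image_eqI[of _ _ b]) simp_all
  qed (use \<open>d \<in> zn v\<close> in \<open>auto simp: zn_def mod_diff_left_eq\<close>)
  then show ?thesis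
    using count_diff_mset[OF assms(1,2)] by (simp add: card_image inj_on_def)
qed

lemma count_diff_mset_by_minuend:
  assumes "A \<subseteq> zn v" "B \<subseteq> zn v" "d \<in> zn v"
  shows "count (diff_mset v A B) d = card {a \<in> A. (a - d) mod int v \<in> B}"
proof -
  have "{(a, b) \<in> A \<times> B. (a - b) mod int v = d} = (\<lambda>a. (a, (a - d) mod int v)) ` {a \<in> A. (a - d) mod int v \<in> B}"
  proof (intro equalityI subsetI)
    fix x assume "x \<in> {(a, b) \<in> A \<times> B. (a - b) mod int v = d}"
    then obtain a b where "x = (a, b)" "a \<in> A" "b \<in> B" "(a - b) mod int v = d" by blast
    moreover from this have "(a - d) mod int v = b"
      using \<open>B \<subseteq> zn v\<close> by (auto simp: zn_def mod_diff_right_eq)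
    ultimately show "x \<in> (\<lambda>a. (a, (a - d) mod int v)) ` {a \<in> A. (a - d) mod int v \<in> B}"
      by (intro image_eqI[of _ _ a]) simp_all
  qed (use \<open>d \<in> zn v\<close> in \<open>auto simp: zn_def mod_diff_right_eq\<close>)
  then show ?thesis
    using count_diff_mset[OF assms(1,2)] by (simp add: card_image inj_on_def)
qed

lemma diff_mset_eq_repeat_zn:
  assumes "v > 0" and "\<And>d. d \<in> zn v \<Longrightarrow> count (diff_mset v A B) d = c"
  shows "diff_mset v A B = repeat_mset c (mset_set (zn v))"
proof (rule multiset_eqI)
  fix d
  have "finite (zn v)"
    by (simp add: zn_def)
  moreover have "d \<notin> zn v \<Longrightarrow> count (diff_mset v A B) d = 0"
    using set_diff_mset_subset_zn[OF \<open>v > 0\<close>, of A B] by (auto simp: not_in_iff[symmetric])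
  ultimately show "count (diff_mset v A B) d = count (repeat_mset c (mset_set (zn v))) d"
    using assms(2) by (cases "d \<in> zn v") simp_all
qed

lemma sum_repeat_mset_const:
  "finite S \<Longrightarrow> (\<Sum>j\<in>S. repeat_mset c M) = repeat_mset (card S * c) M"
  by (induction S rule: finite_induct) (auto simp: repeat_mset_distrib)

definition zero_digit_set :: "nat \<Rightarrow> nat \<Rightarrow> int set" where
  "zero_digit_set N k = {x \<in> zn (2 ^ N). x mod 2 ^ (k + 1) < 2 ^ k}"

lemma zn_power2: "zn (2 ^ N) = {0..<(2::int) ^ N}"
  by (simp add: zn_def)

lemma zero_digit_set_subset_zn: "zero_digit_set N k \<subseteq> zn (2 ^ N)"
  by (auto simp: zero_digit_set_def)

lemma mod_power2_mem_zero_digit_set: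
  assumes "k < N"
  shows "x mod 2 ^ N \<in> zero_digit_set N k \<longleftrightarrow> x mod 2 ^ (k + 1) < (2::int) ^ k"
proof -
  have "(2::int) ^ (k + 1) dvd 2 ^ N"
    by (rule le_imp_power_dvd) (use assms in simp)
  then show ?thesis
    by (simp add: zero_digit_set_def zn_power2 mod_mod_cancel)
qed

lemma card_zero_digit_set:
  assumes "k < N"
  shows "card (zero_digit_set N k) = 2 ^ (N - 1)"
proof -
  have "card (zero_digit_set N k) = 2 ^ (N - (k + 1)) * card {b\<in>{0..<(2::int) ^ (k + 1)}. b mod 2 ^ (k + 1) < 2 ^ k}"
    unfolding zero_digit_set_def zn_power2 by (rule card_periodic_pow2) (use assms in simp_all)
  also have "\<dots> = 2 ^ (N - (k + 1)) * 2 ^ k"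
    using card_zero_digit_translate[of k 0] by simp
  also have "\<dots> = 2 ^ (N - 1)"
    using assms by (simp flip: power_add)
  finally show ?thesis .
qed

lemma inj_on_zero_digit_set: "inj_on (zero_digit_set N) {..<N}"
proof (rule linorder_inj_onI')
  fix i j assume "i \<in> {..<N}" "j \<in> {..<N}" "i < j"
  then have "(2::int) ^ i < 2 ^ j" "(2::int) ^ j < 2 ^ N"
    by simp_all
  moreover have "(2::int) ^ i mod 2 ^ (j + 1) = 2 ^ i"
    by (intro mod_pos_pos_trivial power_strict_increasing) (use \<open>i < j\<close> in simp_all)
  ultimately have "(2::int) ^ i \<in> zero_digit_set N j"
    by (simp add: zero_digit_set_def zn_power2)
  moreover have "(2::int) ^ i \<notin> zero_digit_set N i"
    by (simp add: zero_digit_set_def)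
  ultimately show "zero_digit_set N i \<noteq> zero_digit_set N j"
    by blast
qed

lemma count_diff_zero_digit_sets:
  assumes "i < N" "j < N" "i \<noteq> j" "d \<in> zn (2 ^ N)"
  shows "count (diff_mset (2 ^ N) (zero_digit_set N i) (zero_digit_set N j)) d = 2 ^ (N - 2)"
  \<comment> \<open>Parametrize the representations of \<open>d\<close> by their component in the set with the
    larger digit index, so that the count has the shape of \<open>card_two_zero_digits\<close>.\<close>
proof (cases "i < j")
  case True
  have "count (diff_mset (2 ^ N) (zero_digit_set N i) (zero_digit_set N j)) d
      = card {b \<in> zero_digit_set N j. (b + d) mod 2 ^ N \<in> zero_digit_set N i}"
    using count_diff_mset_by_subtrahend[OF zero_digit_set_subset_zn zero_digit_set_subset_zn assms(4)] by simp
  also have "\<dots> = card {b\<in>{0..<(2::int) ^ N}. b mod 2 ^ (j + 1) < 2 ^ j \<and> (b + d) mod 2 ^ (i + 1) < 2 ^ i}"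
    by (simp only: mod_power2_mem_zero_digit_set[OF \<open>i < N\<close>]) (simp add: zero_digit_set_def zn_power2 conj_ac)
  also have "\<dots> = 2 ^ (N - 2)"
    using True \<open>j < N\<close> by (rule card_two_zero_digits)
  finally show ?thesis .
next
  case False
  then have "j < i"
    using \<open>i \<noteq> j\<close> by simp
  have "count (diff_mset (2 ^ N) (zero_digit_set N i) (zero_digit_set N j)) d
      = card {a \<in> zero_digit_set N i. (a - d) mod 2 ^ N \<in> zero_digit_set N j}"
    using count_diff_mset_by_minuend[OF zero_digit_set_subset_zn zero_digit_set_subset_zn assms(4)] by simp
  also have "\<dots> = card {a\<in>{0..<(2::int) ^ N}. a mod 2 ^ (i + 1) < 2 ^ i \<and> (a + - d) mod 2 ^ (j + 1) < 2 ^ j}"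
    by (simp only: mod_power2_mem_zero_digit_set[OF \<open>j < N\<close>]) (simp add: zero_digit_set_def zn_power2 conj_ac)
  also have "\<dots> = 2 ^ (N - 2)"
    using \<open>j < i\<close> \<open>i < N\<close> by (rule card_two_zero_digits)
  finally show ?thesis .
qed

lemma sum_diff_mset_zero_digit_sets:
  assumes "i < N"
  shows "(\<Sum>j\<in>{..<N} - {i}. diff_mset (2 ^ N) (zero_digit_set N i) (zero_digit_set N j))
    = lam_group (2 ^ N) ((N - 1) * 2 ^ (N - 2))"
proof -
  have "(\<Sum>j\<in>{..<N} - {i}. diff_mset (2 ^ N) (zero_digit_set N i) (zero_digit_set N j))
      = (\<Sum>j\<in>{..<N} - {i}. repeat_mset (2 ^ (N - 2)) (mset_set (zn (2 ^ N))))"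
    using assms by (intro sum.cong refl diff_mset_eq_repeat_zn count_diff_zero_digit_sets) auto
  also have "\<dots> = repeat_mset (card ({..<N} - {i}) * 2 ^ (N - 2)) (mset_set (zn (2 ^ N)))"
    by (simp add: sum_repeat_mset_const)
  finally show ?thesis
    using assms by (simp add: lam_group_def)
qed

theorem corollary3p6:
  fixes N :: nat
  assumes "N > 1"
  shows "\<exists>A :: nat \<Rightarrow> int set. inj_on A {..<N} \<and>
           nondisjoint_sedf (2 ^ N) N (2 ^ (N - 1)) ((N - 1) * 2 ^ (N - 2)) A"
proof (intro exI conjI)
  show "inj_on (zero_digit_set N) {..<N}"
    by (rule inj_on_zero_digit_set)
  show "nondisjoint_sedf (2 ^ N) N (2 ^ (N - 1)) ((N - 1) * 2 ^ (N - 2)) (zero_digit_set N)"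
    using assms by (simp add: nondisjoint_sedf_def zero_digit_set_subset_zn card_zero_digit_set
        sum_diff_mset_zero_digit_sets)
qed

end
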